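(* Consider the system $\xi^+=F(\xi,u,\omega)$, $\omega\in\Omega(\xi,u)$, with sensor output $\upsilon=H(\xi,u,\omega)$, estimator $\hat\xi(k)=\Phi^\xi_k(\overline\xi,\mathbf u_{0:k-1},\boldsymbol\upsilon_{0:k-1})$, control $u=\hat\kappa(\hat\xi)$, estimation error $\varepsilon(k)=G_\varepsilon(\xi(k))-\hat\xi(k)$, $\overline\varepsilon:=G_\varepsilon(\xi(0))-\overline\xi$, and output $\zeta=G(\hat\xi)$. Suppose $\Phi^\xi_0$ is the identity map and there exist constants $a_1,a_2,a_3,a_4,c_1,c_2,c_3,c_4>0$, a closed set $\mathcal{S}\subseteq\Xi\times\hat\Xi$ that is robustly positively invariant, functions $V:\hat\Xi\to\mathbb{R}_{\ge0}$, $V_\varepsilon:\Xi\times\hat\Xi\to\mathbb{R}_{\ge0}$, and $\sigma,\sigma_\varepsilon\in\mathcal{K}$, such that $\frac{a_4c_4}{a_3c_1}<1$, $\frac{a_4c_4}{a_3c_3}<\frac{c_1}{c_1+c_2}$, and along every closed-loop trajectory with $(\xi(0),\overline\xi)\in\mathcal{S}$, at every time (with $^+$ denoting the next time step): $a_1|\zeta|^2\le V(\hat\xi)\le a_2|\zeta|^2$; $V(\hat\xi^+)\le V(\hat\xi)-a_3|\zeta|^2+a_4|(\varepsilon,\varepsilon^+)|^2+\sigma(|\omega|)$; $c_1|\varepsilon|^2\le V_\varepsilon(\xi,\hat\xi)\le c_2|\varepsilon|^2$; $V_\varepsilon(\xi^+,\hat\xi^+)\le V_\varepsilon(\xi,\hat\xi)-c_3|\varepsilon|^2+c_4|\zeta|^2+\sigma_\varepsilon(|\omega|)$.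 Then the closed-loop system is robustly exponentially stable in $\mathcal{S}$ w.r.t. $\zeta$: there exist $c_\zeta>0$, $\lambda_\zeta\in(0,1)$ and $\sigma_\zeta\in\mathcal{K}$ such that \[ |(\zeta(k),\varepsilon(k))|\le c_\zeta\lambda_\zeta^k|(\zeta(0),\overline\varepsilon)|+\sum_{i=0}^k\lambda_\zeta^i\sigma_\zeta(|\omega(k-i)|) \] for all $k\ge0$ and all closed-loop trajectories with $(\xi(0),\overline\xi)\in\mathcal{S}$.
   Context: $\Xi\subseteq\mathbb{R}^{n_\xi}$, $\hat\Xi\subseteq\mathbb{R}^{n_{\hat\xi}}$, $\Upsilon\subseteq\mathbb{R}^{n_\upsilon}$ are closed, $\mathbb{U}$ is the input set; $F(\xi,u,\omega)\in\Xi$ and $H(\xi,u,\omega)\in\Upsilon$ for $(\xi,u)\in\Xi\times\mathbb{U}$, $\omega\in\Omega(\xi,u)\ni0$; $\Phi^\xi_k:\hat\Xi\times\mathbb{U}^k\times\Upsilon^k\to\hat\Xi$; $\hat\kappa:\hat\Xi\to\mathbb{U}$; $G_\varepsilon:\Xi\to\hat\Xi$; $G:\hat\Xi\to\mathbb{R}^{n_\zeta}$; $\overline\xi\in\hat\Xi$ is the prior guess. A closed-loop trajectory is $(\boldsymbol\xi,\hat{\boldsymbol\xi},\mathbf u,\boldsymbol\omega,\boldsymbol\upsilon)$ with $\omega(k)\in\Omega(\xi(k),u(k))$, $\xi(k+1)=F(\xi(k),u(k),\omega(k))$, $\upsilon(k)=H(\xi(k),u(k),\omega(k))$, $\hat\xi(k)=\Phi^\xi_k(\overline\xi,\mathbf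 u_{0:k-1},\boldsymbol\upsilon_{0:k-1})$, $u(k)=\hat\kappa(\hat\xi(k))$. A closed set $\mathcal{S}$ is robustly positively invariant if every closed-loop trajectory with $(\xi(0),\overline\xi)\in\mathcal{S}$ satisfies $(\xi(k),\hat\xi(k))\in\mathcal{S}$ for all $k$. $\mathcal{K}$: continuous strictly increasing functions $\mathbb{R}_{\ge0}\to\mathbb{R}_{\ge0}$ vanishing at $0$. *)

theory Defs
  imports "HOL-Analysis.Analysis"
begin

definition class_K :: "(real \<Rightarrow> real) \<Rightarrow> bool" where
  "class_K \<sigma> \<longleftrightarrow> continuous_on {0..} \<sigma> \<and> strict_mono_on {0..} \<sigma> \<and> \<sigma> 0 = 0
      \<and> (\<forall>s\<ge>0. \<sigma> s \<ge> 0)"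

definition closed_loop ::
  "('x \<Rightarrow> 'u \<Rightarrow> 'w \<Rightarrow> 'x) \<Rightarrow> ('x \<Rightarrow> 'u \<Rightarrow> 'w \<Rightarrow> 'y) \<Rightarrow> ('x \<Rightarrow> 'u \<Rightarrow> 'w set)
   \<Rightarrow> (nat \<Rightarrow> 'e \<Rightarrow> 'u list \<Rightarrow> 'y list \<Rightarrow> 'e) \<Rightarrow> ('e \<Rightarrow> 'u) \<Rightarrow> 'e
   \<Rightarrow> (nat \<Rightarrow> 'x) \<Rightarrow> (nat \<Rightarrow> 'e) \<Rightarrow> (nat \<Rightarrow> 'u) \<Rightarrow> (nat \<Rightarrow> 'w) \<Rightarrow> (nat \<Rightarrow> 'y) \<Rightarrow> bool"
  where
  "closed_loop F H \<Omega> Phi \<kappa> xbar xi xh u w y \<longleftrightarrow>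
     (\<forall>k. w k \<in> \<Omega> (xi k) (u k)
        \<and> xi (Suc k) = F (xi k) (u k) (w k)
        \<and> y k = H (xi k) (u k) (w k)
        \<and> xh k = Phi k xbar (map u [0..<k]) (map y [0..<k])
        \<and> u k = \<kappa> (xh k))"

definition RPI ::
  "('x::topological_space \<times> 'e::topological_space) set \<Rightarrow>
   ('x \<Rightarrow> 'u \<Rightarrow> 'w \<Rightarrow> 'x) \<Rightarrow> ('x \<Rightarrow> 'u \<Rightarrow> 'w \<Rightarrow> 'y) \<Rightarrow> ('x \<Rightarrow> 'u \<Rightarrow> 'w set)
   \<Rightarrow> (nat \<Rightarrow> 'e \<Rightarrow> 'u list \<Rightarrow> 'y list \<Rightarrow> 'e) \<Rightarrow> ('e \<Rightarrow> 'u) \<Rightarrow> bool"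
  where
  "RPI S F H \<Omega> Phi \<kappa> \<longleftrightarrow> closed S \<and>
     (\<forall>xbar xi xh u w y. closed_loop F H \<Omega> Phi \<kappa> xbar xi xh u w y \<and> (xi 0, xbar) \<in> S
        \<longrightarrow> (\<forall>k. (xi k, xh k) \<in> S))"

end

theory Submission
  imports Defs
begin

(* The two Lyapunov inequalities are merged into one for W = V + mu Ve. The weight mu is chosen
   so that the term a4 |eps+|^2 is absorbed by mu c1 |eps+|^2 <= mu Ve+, while with
   nu = mu + a4/c1 the cross terms a4 |eps|^2 and nu c4 |zeta|^2 are dominated by the decrease
   terms c3 nu |eps|^2 and a3 |zeta|^2; the two gain conditions say exactly that such a nu exists.
   Then W+ <= rho W + sigma + nu sigma_e with rho < 1, so sqrt W contracts at rate sqrt rho up to a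
   disturbance term, and the sandwich m |(zeta, eps)|^2 <= W <= M |(zeta, eps)|^2 turns this into
   the claimed estimate. *)

lemma class_K_nonneg: "class_K f \<Longrightarrow> 0 \<le> r \<Longrightarrow> 0 \<le> f r"
  unfolding class_K_def by blast

lemma class_K_add:
  assumes "class_K f" "class_K g"
  shows "class_K (\<lambda>r. f r + g r)"
  using assms unfolding class_K_def strict_mono_on_def
  by (auto intro: continuous_intros add_strict_mono)

lemma class_K_cmult:
  assumes "class_K f" "c > 0"
  shows "class_K (\<lambda>r. c * f r)"
  using assms unfolding class_K_def strict_mono_on_def
  by (auto intro: continuous_intros)

lemma class_K_sqrt:
  assumes "class_K f"
  shows "class_K (\<lambda>r. sqrt (f r))"
  using assms unfolding class_K_def strict_mono_on_def
  by (auto intro: continuous_intros)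

lemma linear_recurrence_bound:
  fixes y b :: "nat \<Rightarrow> real"
  assumes step: "\<And>k. y (Suc k) \<le> lam * y k + b k" and "lam \<ge> 0"
  shows "y k \<le> lam ^ k * y 0 + (\<Sum>i<k. lam ^ i * b (k - Suc i))"
proof (induction k)
  case 0
  then show ?case by simp
next
  case (Suc k)
  have "y (Suc k) \<le> lam * y k + b k" by (rule step)
  also have "\<dots> \<le> lam * (lam ^ k * y 0 + (\<Sum>i<k. lam ^ i * b (k - Suc i))) + b k"
    using Suc \<open>lam \<ge> 0\<close> by (simp add: mult_left_mono)
  also have "\<dots> = lam ^ Suc k * y 0 + (b k + lam * (\<Sum>i<k. lam ^ i * b (k - Suc i)))"
    by (simp add: algebra_simps)
  also have "b k + lam * (\<Sum>i<k. lam ^ i * b (k - Suc i)) = (\<Sum>i<Suc k. lam ^ i * b (Suc k - Suc i))"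
    unfolding sum.lessThan_Suc_shift by (simp add: sum_distrib_left mult.assoc)
  finally show ?case .
qed

lemma sqrt_linear_recurrence_bound:
  fixes L s :: "nat \<Rightarrow> real"
  assumes step: "\<And>k. L (Suc k) \<le> \<rho> * L k + s k"
    and nonneg: "\<And>k. 0 \<le> L k" "\<And>k. 0 \<le> s k" and "\<rho> \<ge> 0"
  shows "sqrt (L k) \<le> sqrt \<rho> ^ k * sqrt (L 0) + (\<Sum>i<k. sqrt \<rho> ^ i * sqrt (s (k - Suc i)))"
proof (rule linear_recurrence_bound)
  fix k
  have "sqrt (L (Suc k)) \<le> sqrt (\<rho> * L k + s k)" using step by simp
  also have "\<dots> \<le> sqrt (\<rho> * L k) + sqrt (s k)"
    using nonneg \<open>\<rho> \<ge> 0\<close> by (intro sqrt_add_le_add_sqrt) auto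
  finally show "sqrt (L (Suc k)) \<le> sqrt \<rho> * sqrt (L k) + sqrt (s k)"
    by (simp add: real_sqrt_mult)
qed (use \<open>\<rho> \<ge> 0\<close> in simp)

locale lyapunov_small_gain =
  fixes a1 a2 a3 a4 c1 c2 c3 c4 :: real
  assumes pos: "a1 > 0" "a2 > 0" "a3 > 0" "a4 > 0" "c1 > 0" "c2 > 0" "c3 > 0" "c4 > 0"
    and gain1: "a4 * c4 / (a3 * c1) < 1"
    and gain2: "a4 * c4 / (a3 * c3) < c1 / (c1 + c2)"
begin

text \<open>\<nu> has to exceed a4/c1 and a4 (c1 + c2)/(c1 c3) and stay below a3/c4; the gain conditions
  make this interval nonempty, and \<nu> is its midpoint. The entry 1/2 in \<rho> only keeps \<rho> positive.\<close>
definition \<nu> :: real where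
  "\<nu> = (max (a4 / c1) (a4 * (c1 + c2) / (c1 * c3)) + a3 / c4) / 2"

definition \<mu> :: real where "\<mu> = \<nu> - a4 / c1"

definition \<rho> :: real where
  "\<rho> = max (1 / 2) (max (1 - (a3 - \<nu> * c4) / a2) ((\<nu> - (\<nu> * c3 - a4) / c2) / \<mu>))"

definition m :: real where "m = min a1 (\<mu> * c1)"

definition M :: real where "M = max a2 (\<mu> * c2)"

lemma nu_bounds: "a4 / c1 < \<nu>" "a4 * (c1 + c2) / (c1 * c3) < \<nu>" "\<nu> < a3 / c4"
proof -
  define l where "l = max (a4 / c1) (a4 * (c1 + c2) / (c1 * c3))"
  have "a4 / c1 < a3 / c4" using gain1 pos by (simp add: field_simps)
  moreover have "a4 * (c1 + c2) / (c1 * c3) < a3 / c4" using gain2 pos by (simp add: field_simps)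
  ultimately have "l < a3 / c4" by (simp add: l_def)
  moreover have "a4 / c1 \<le> l" "a4 * (c1 + c2) / (c1 * c3) \<le> l" by (simp_all add: l_def)
  moreover have "\<nu> = (l + a3 / c4) / 2" by (simp add: \<nu>_def l_def)
  ultimately show "a4 / c1 < \<nu>" "a4 * (c1 + c2) / (c1 * c3) < \<nu>" "\<nu> < a3 / c4"
    by auto
qed

lemma mu_pos: "\<mu> > 0"
  using nu_bounds by (simp add: \<mu>_def)

lemma nu_eq: "\<nu> = \<mu> + a4 / c1"
  by (simp add: \<mu>_def)

lemma nu_pos: "\<nu> > 0"
  unfolding nu_eq using mu_pos pos by (intro add_pos_pos divide_pos_pos)

lemma zeta_decrease_pos: "a3 - \<nu> * c4 > 0"
  using nu_bounds(3) pos by (simp add: field_simps)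

lemma eps_decrease_bound: "(\<nu> * c3 - a4) / c2 > a4 / c1"
proof -
  have "\<nu> * c3 - a4 > a4 * c2 / c1" using nu_bounds(2) pos by (simp add: field_simps)
  then show ?thesis using pos by (simp add: field_simps)
qed

lemma rho_pos: "\<rho> > 0"
  by (simp add: \<rho>_def)

lemma rho_less_1: "\<rho> < 1"
proof -
  have "(\<nu> - (\<nu> * c3 - a4) / c2) / \<mu> < 1"
    using eps_decrease_bound mu_pos by (simp add: nu_eq)
  then show ?thesis using zeta_decrease_pos pos by (simp add: \<rho>_def)
qed

lemma rho_bounds: "1 - (a3 - \<nu> * c4) / a2 \<le> \<rho>" "\<nu> - (\<nu> * c3 - a4) / c2 \<le> \<rho> * \<mu>"
proof -
  show "1 - (a3 - \<nu> * c4) / a2 \<le> \<rho>" by (simp add: \<rho>_def)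
  have "(\<nu> - (\<nu> * c3 - a4) / c2) / \<mu> \<le> \<rho>" by (simp add: \<rho>_def)
  then show "\<nu> - (\<nu> * c3 - a4) / c2 \<le> \<rho> * \<mu>" using mu_pos by (simp add: field_simps)
qed

lemma m_pos: "m > 0"
  using pos mu_pos by (simp add: m_def)

lemma M_pos: "M > 0"
  using pos by (simp add: M_def)

lemma combined_lower_bound:
  assumes "a1 * z \<le> V" "c1 * e \<le> W" "0 \<le> z" "0 \<le> e"
  shows "m * (z + e) \<le> V + \<mu> * W"
proof -
  have "m * z \<le> a1 * z" using \<open>0 \<le> z\<close> by (intro mult_right_mono) (auto simp: m_def)
  moreover have "m * e \<le> \<mu> * c1 * e" using \<open>0 \<le> e\<close> by (intro mult_right_mono) (auto simp: m_def)
  moreover have "\<mu> * c1 * e \<le> \<mu> * W" using assms(2) mu_pos by (simp add: mult.assoc)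
  ultimately show ?thesis using assms(1) by (simp add: algebra_simps)
qed

lemma combined_upper_bound:
  assumes "V \<le> a2 * z" "W \<le> c2 * e" "0 \<le> z" "0 \<le> e"
  shows "V + \<mu> * W \<le> M * (z + e)"
proof -
  have "a2 * z \<le> M * z" using \<open>0 \<le> z\<close> by (intro mult_right_mono) (auto simp: M_def)
  moreover have "\<mu> * c2 * e \<le> M * e" using \<open>0 \<le> e\<close> by (intro mult_right_mono) (auto simp: M_def)
  moreover have "\<mu> * W \<le> \<mu> * c2 * e" using assms(2) mu_pos by (simp add: mult.assoc)
  ultimately show ?thesis using assms(1) by (simp add: algebra_simps)
qed

lemma combined_lyapunov_step:
  assumes V_le: "V \<le> a2 * z" and V_step: "V' \<le> V - a3 * z + a4 * (e + e') + s1"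
    and W_bounds: "c1 * e' \<le> W'" "W \<le> c2 * e"
    and W_step: "W' \<le> W - c3 * e + c4 * z + s2"
    and "0 \<le> V" "0 \<le> W"
  shows "V' + \<mu> * W' \<le> \<rho> * (V + \<mu> * W) + s1 + \<nu> * s2"
proof -
  define \<alpha> where "\<alpha> = a3 - \<nu> * c4"
  define \<beta> where "\<beta> = \<nu> * c3 - a4"
  have "a4 * e' \<le> (a4 / c1) * W'"
    using mult_left_mono[OF W_bounds(1), of "a4 / c1"] pos by simp
  moreover have "\<nu> * W' \<le> \<nu> * (W - c3 * e + c4 * z + s2)"
    using W_step nu_pos by simp
  ultimately have combined: "V' + \<mu> * W' \<le> V + \<nu> * W - \<alpha> * z - \<beta> * e + s1 + \<nu> * s2"
    using V_step unfolding \<alpha>_def \<beta>_def nu_eq by (simp add: algebra_simps)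
  have "(\<alpha> / a2) * V \<le> \<alpha> * z"
    using mult_left_mono[OF V_le, of "\<alpha> / a2"] zeta_decrease_pos pos by (simp add: \<alpha>_def)
  moreover have "(\<beta> / c2) * W \<le> \<beta> * e"
  proof -
    have "0 < \<beta> / c2"
      using eps_decrease_bound divide_pos_pos[OF pos(4) pos(5)] unfolding \<beta>_def by linarith
    then have "\<beta> \<ge> 0" using pos(6) by (simp add: zero_less_divide_iff)
    then show ?thesis using mult_left_mono[OF W_bounds(2), of "\<beta> / c2"] pos by simp
  qed
  moreover have "(1 - \<alpha> / a2) * V \<le> \<rho> * V"
    using rho_bounds(1) \<open>0 \<le> V\<close> unfolding \<alpha>_def by (rule mult_right_mono)
  moreover have "(\<nu> - \<beta> / c2) * W \<le> (\<rho> * \<mu>) * W"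
    using rho_bounds(2) \<open>0 \<le> W\<close> unfolding \<beta>_def by (rule mult_right_mono)
  ultimately show ?thesis using combined by (simp add: algebra_simps)
qed

lemma exponential_iss_bound:
  fixes z e V W s1 s2 :: "nat \<Rightarrow> real"
  assumes nonneg: "\<And>k. 0 \<le> z k" "\<And>k. 0 \<le> e k" "\<And>k. 0 \<le> s1 k" "\<And>k. 0 \<le> s2 k"
    and V_bounds: "\<And>k. a1 * z k \<le> V k" "\<And>k. V k \<le> a2 * z k"
    and V_step: "\<And>k. V (Suc k) \<le> V k - a3 * z k + a4 * (e k + e (Suc k)) + s1 k"
    and W_bounds: "\<And>k. c1 * e k \<le> W k" "\<And>k. W k \<le> c2 * e k"
    and W_step: "\<And>k. W (Suc k) \<le> W k - c3 * e k + c4 * z k + s2 k"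
  shows "sqrt (z k + e k) \<le> sqrt (M / m) * sqrt \<rho> ^ k * sqrt (z 0 + e 0)
           + (\<Sum>i=0..k. sqrt \<rho> ^ i * (sqrt (s1 (k - i) + \<nu> * s2 (k - i)) / (sqrt \<rho> * sqrt m)))"
proof -
  define L where "L j = (V j + \<mu> * W j) / m" for j
  define s where "s j = (s1 j + \<nu> * s2 j) / m" for j
  define g where "g i = sqrt \<rho> ^ i * (sqrt (s1 (k - i) + \<nu> * s2 (k - i)) / (sqrt \<rho> * sqrt m))" for i
  have V_nonneg: "0 \<le> V j" for j
    using order_trans[OF mult_nonneg_nonneg V_bounds(1)] nonneg(1) pos(1) by simp
  have W_nonneg: "0 \<le> W j" for j
    using order_trans[OF mult_nonneg_nonneg W_bounds(1)] nonneg(2) pos(5) by simp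
  have L_nonneg: "0 \<le> L j" for j
    using V_nonneg W_nonneg mu_pos m_pos by (simp add: L_def)
  have s_nonneg: "0 \<le> s j" for j
    using nonneg nu_pos m_pos by (simp add: s_def)
  have L_step: "L (Suc j) \<le> \<rho> * L j + s j" for j
  proof -
    have "V (Suc j) + \<mu> * W (Suc j) \<le> \<rho> * (V j + \<mu> * W j) + (s1 j + \<nu> * s2 j)"
      using combined_lyapunov_step[OF V_bounds(2)[of j] V_step[of j] W_bounds(1)[of "Suc j"]
          W_bounds(2)[of j] W_step[of j] V_nonneg[of j] W_nonneg[of j]] by simp
    then have "(V (Suc j) + \<mu> * W (Suc j)) / m \<le> (\<rho> * (V j + \<mu> * W j) + (s1 j + \<nu> * s2 j)) / m"
      using m_pos by (simp add: divide_right_mono)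
    also have "\<dots> = \<rho> * L j + s j" by (simp add: L_def s_def add_divide_distrib distrib_left)
    finally show ?thesis by (simp add: L_def)
  qed
  have g_Suc: "g (Suc i) = sqrt \<rho> ^ i * sqrt (s (k - Suc i))" for i
    using rho_pos m_pos by (simp add: g_def s_def real_sqrt_divide)
  have "sqrt (z k + e k) \<le> sqrt (L k)"
    using combined_lower_bound[OF V_bounds(1) W_bounds(1) nonneg(1,2)] m_pos
    by (simp add: L_def pos_le_divide_eq mult.commute)
  also have "\<dots> \<le> sqrt \<rho> ^ k * sqrt (L 0) + (\<Sum>i<k. sqrt \<rho> ^ i * sqrt (s (k - Suc i)))"
    using L_step L_nonneg s_nonneg rho_pos by (intro sqrt_linear_recurrence_bound) auto
  also have "\<dots> \<le> sqrt \<rho> ^ k * (sqrt (M / m) * sqrt (z 0 + e 0)) + (g 0 + (\<Sum>i<k. g (Suc i)))"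
  proof -
    have "L 0 \<le> M / m * (z 0 + e 0)"
      using combined_upper_bound[OF V_bounds(2) W_bounds(2) nonneg(1,2)] m_pos
      by (simp add: L_def divide_right_mono)
    then have "sqrt (L 0) \<le> sqrt (M / m) * sqrt (z 0 + e 0)"
      by (simp add: real_sqrt_mult[symmetric])
    moreover have "0 \<le> g 0" using nonneg(3,4) nu_pos rho_pos m_pos by (simp add: g_def)
    ultimately show ?thesis unfolding g_Suc using rho_pos by (intro add_mono mult_left_mono) auto
  qed
  also have "g 0 + (\<Sum>i<k. g (Suc i)) = (\<Sum>i=0..k. g i)"
    by (simp only: sum.lessThan_Suc_shift[symmetric] lessThan_Suc_atMost atLeast0AtMost)
  finally show ?thesis by (simp add: g_def mult_ac)
qed

end

theorem theorem3:
  fixes Xi :: "'x::euclidean_space set" and Xh :: "'e::euclidean_space set"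
    and Ups :: "'y::euclidean_space set" and U :: "'u set"
    and F :: "'x \<Rightarrow> 'u \<Rightarrow> 'w::euclidean_space \<Rightarrow> 'x"
    and H :: "'x \<Rightarrow> 'u \<Rightarrow> 'w \<Rightarrow> 'y"
    and \<Omega> :: "'x \<Rightarrow> 'u \<Rightarrow> 'w set"
    and Phi :: "nat \<Rightarrow> 'e \<Rightarrow> 'u list \<Rightarrow> 'y list \<Rightarrow> 'e"
    and \<kappa> :: "'e \<Rightarrow> 'u"
    and Ge :: "'x \<Rightarrow> 'e"
    and G :: "'e \<Rightarrow> 'z::euclidean_space"
    and S :: "('x \<times> 'e) set"
    and V :: "'e \<Rightarrow> real" and Ve :: "'x \<Rightarrow> 'e \<Rightarrow> real"
    and \<sigma> \<sigma>e :: "real \<Rightarrow> real"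
    and a1 a2 a3 a4 c1 c2 c3 c4 :: real
  assumes closed_Xi: "closed Xi" and closed_Xh: "closed Xh" and closed_Ups: "closed Ups"
    and F_in: "\<And>\<xi> v \<omega>. \<xi> \<in> Xi \<Longrightarrow> v \<in> U \<Longrightarrow> \<omega> \<in> \<Omega> \<xi> v \<Longrightarrow> F \<xi> v \<omega> \<in> Xi"
    and H_in: "\<And>\<xi> v \<omega>. \<xi> \<in> Xi \<Longrightarrow> v \<in> U \<Longrightarrow> \<omega> \<in> \<Omega> \<xi> v \<Longrightarrow> H \<xi> v \<omega> \<in> Ups"
    and Omega0: "\<And>\<xi> v. \<xi> \<in> Xi \<Longrightarrow> v \<in> U \<Longrightarrow> 0 \<in> \<Omega> \<xi> v"
    and Phi_in: "\<And>k x us ys. x \<in> Xh \<Longrightarrow> length us = k \<Longrightarrow> length ys = k \<Longrightarrow>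
                   set us \<subseteq> U \<Longrightarrow> set ys \<subseteq> Ups \<Longrightarrow> Phi k x us ys \<in> Xh"
    and kappa_in: "\<And>x. x \<in> Xh \<Longrightarrow> \<kappa> x \<in> U"
    and Ge_in: "\<And>\<xi>. \<xi> \<in> Xi \<Longrightarrow> Ge \<xi> \<in> Xh"
    and Phi0: "\<And>x. Phi 0 x [] [] = x"
    and pos: "a1 > 0" "a2 > 0" "a3 > 0" "a4 > 0" "c1 > 0" "c2 > 0" "c3 > 0" "c4 > 0"
    and S_sub: "S \<subseteq> Xi \<times> Xh"
    and S_RPI: "RPI S F H \<Omega> Phi \<kappa>"
    and V_nonneg: "\<And>x. x \<in> Xh \<Longrightarrow> V x \<ge> 0"
    and Ve_nonneg: "\<And>\<xi> x. \<xi> \<in> Xi \<Longrightarrow> x \<in> Xh \<Longrightarrow> Ve \<xi> x \<ge> 0"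
    and K_\<sigma>: "class_K \<sigma>" and K_\<sigma>e: "class_K \<sigma>e"
    and gain1: "a4 * c4 / (a3 * c1) < 1"
    and gain2: "a4 * c4 / (a3 * c3) < c1 / (c1 + c2)"
    and lyap: "\<And>xbar xi xh u w y k.
       closed_loop F H \<Omega> Phi \<kappa> xbar xi xh u w y \<Longrightarrow> (xi 0, xbar) \<in> S \<Longrightarrow>
         a1 * (norm (G (xh k)))\<^sup>2 \<le> V (xh k)
       \<and> V (xh k) \<le> a2 * (norm (G (xh k)))\<^sup>2
       \<and> V (xh (Suc k)) \<le> V (xh k) - a3 * (norm (G (xh k)))\<^sup>2
            + a4 * (norm (Ge (xi k) - xh k, Ge (xi (Suc k)) - xh (Suc k)))\<^sup>2 + \<sigma> (norm (w k))
       \<and> c1 * (norm (Ge (xi k) - xh k))\<^sup>2 \<le> Ve (xi k) (xh k)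
       \<and> Ve (xi k) (xh k) \<le> c2 * (norm (Ge (xi k) - xh k))\<^sup>2
       \<and> Ve (xi (Suc k)) (xh (Suc k)) \<le> Ve (xi k) (xh k) - c3 * (norm (Ge (xi k) - xh k))\<^sup>2
            + c4 * (norm (G (xh k)))\<^sup>2 + \<sigma>e (norm (w k))"
  shows "\<exists>c_z lam sig_z. c_z > 0 \<and> 0 < lam \<and> lam < 1 \<and> class_K sig_z \<and>
     (\<forall>xbar xi xh u w y. closed_loop F H \<Omega> Phi \<kappa> xbar xi xh u w y \<and> (xi 0, xbar) \<in> S \<longrightarrow>
       (\<forall>k. norm (G (xh k), Ge (xi k) - xh k)
            \<le> c_z * lam ^ k * norm (G (xh 0), Ge (xi 0) - xbar)
              + (\<Sum>i=0..k. lam ^ i * sig_z (norm (w (k - i))))))"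
proof -
  interpret gains: lyapunov_small_gain a1 a2 a3 a4 c1 c2 c3 c4
    using pos gain1 gain2 by unfold_locales
  define lam where "lam = sqrt gains.\<rho>"
  define sig_z where "sig_z = (\<lambda>r. sqrt (\<sigma> r + gains.\<nu> * \<sigma>e r) / (lam * sqrt gains.m))"
  have "class_K (\<lambda>r. inverse (lam * sqrt gains.m) * sqrt (\<sigma> r + gains.\<nu> * \<sigma>e r))"
    using gains.rho_pos gains.m_pos gains.nu_pos
    by (intro class_K_cmult class_K_sqrt class_K_add K_\<sigma> K_\<sigma>e) (auto simp: lam_def)
  then have K_sig_z: "class_K sig_z"
    by (simp add: sig_z_def divide_inverse_commute)
  show ?thesis
  proof (rule exI[of _ "sqrt (gains.M / gains.m)"], rule exI[of _ lam], rule exI[of _ sig_z],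
      intro conjI allI impI)
    fix xbar xi xh u w y k
    assume "closed_loop F H \<Omega> Phi \<kappa> xbar xi xh u w y \<and> (xi 0, xbar) \<in> S"
    then have cl: "closed_loop F H \<Omega> Phi \<kappa> xbar xi xh u w y" and S0: "(xi 0, xbar) \<in> S"
      by auto
    have "xh 0 = xbar" using cl Phi0 by (simp add: closed_loop_def)
    moreover note gains.exponential_iss_bound[of "\<lambda>k. (norm (G (xh k)))\<^sup>2" "\<lambda>k. (norm (Ge (xi k) - xh k))\<^sup>2"
        "\<lambda>k. \<sigma> (norm (w k))" "\<lambda>k. \<sigma>e (norm (w k))" "\<lambda>k. V (xh k)" "\<lambda>k. Ve (xi k) (xh k)"]
    ultimately show "norm (G (xh k), Ge (xi k) - xh k)
        \<le> sqrt (gains.M / gains.m) * lam ^ k * norm (G (xh 0), Ge (xi 0) - xbar)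
          + (\<Sum>i=0..k. lam ^ i * sig_z (norm (w (k - i))))"
      using lyap[OF cl S0] class_K_nonneg[OF K_\<sigma>] class_K_nonneg[OF K_\<sigma>e]
      by (simp add: norm_Pair lam_def sig_z_def)
  qed (use gains.rho_pos gains.rho_less_1 gains.m_pos gains.M_pos K_sig_z in \<open>auto simp: lam_def\<close>)
qed

end
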